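(* Let $f:\mathbb{R}^d\times\mathcal{Z}\to\mathbb{R}$ be such that for every $z$, $f(\cdot,z)$ is non-negative, convex and $\beta$-smooth, let $S=(z_1,\dots,z_n)$, and suppose there is $w^\star\in\mathbb{R}^d$ that is a $\rho$-flat minimum of $f(\cdot,z_i)$ for every $i$ (so $F_S(w^\star+v)=0$ for all $\|v\|\le\rho$). Let $0<\eta\le \frac{1}{4\beta}$, $r>0$, $w_1\in\mathbb{R}^d$, and let $\{w_t\}_{t=1}^{T}$ satisfy $w_{t+1}=w_t-\eta\nabla F_S(w_t+v_t)$ where $\{v_t\}_{t=1}^T$ are arbitrary vectors with $\|v_t\|\le r$. Then $$\frac1T\sum_{t=1}^T F_S(w_t+v_t)-F_S(w^\star)\le \frac{\|w_1-w^\star\|^2}{\eta T}+4\beta\max\{r-\rho,0\}^2.$$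
   Context: Norms are Euclidean. $F_S(w)=\frac1n\sum_{i=1}^n f(w,z_i)$. A function is $\beta$-smooth if its gradient is $\beta$-Lipschitz. For $\rho\ge0$, a point $w^\star$ is a $\rho$-flat minimum of a non-negative function $g$ if $g(w)=0$ for every $w$ with $\|w-w^\star\|\le\rho$. *)

theory Defs
  imports "HOL-Analysis.Analysis"
begin

definition grad :: "('a::euclidean_space \<Rightarrow> real) \<Rightarrow> 'a \<Rightarrow> 'a" where
  "grad F x = (SOME g. (F has_derivative (\<lambda>h. g \<bullet> h)) (at x))"

definition smooth_fun :: "real \<Rightarrow> ('a::euclidean_space \<Rightarrow> real) \<Rightarrow> bool" where
  "smooth_fun \<beta> F \<longleftrightarrow> (\<forall>x. F differentiable (at x)) \<and>
     (\<forall>x y. norm (grad F x - grad F y) \<le> \<beta> * norm (x - y))"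

definition emp_risk :: "('a \<Rightarrow> 'z \<Rightarrow> real) \<Rightarrow> nat \<Rightarrow> (nat \<Rightarrow> 'z) \<Rightarrow> 'a \<Rightarrow> real" where
  "emp_risk f n S w = (1 / real n) * (\<Sum>i<n. f w (S i))"

definition flat_min :: "real \<Rightarrow> ('a::real_normed_vector \<Rightarrow> real) \<Rightarrow> 'a \<Rightarrow> bool" where
  "flat_min \<rho> g w0 \<longleftrightarrow> (\<forall>w. norm (w - w0) \<le> \<rho> \<longrightarrow> g w = 0)"

end

(* One step of gradient descent evaluated at the perturbed point w + v is compared with
   the point wstar + z of the flat region closest to it, where F vanishes. Convexity gives
   grad F (w + v) . (w - wstar) >= F (w + v) - |grad F (w + v)| max (r - rho) 0,
   and the self-bounding inequality |grad F|^2 <= 2 beta F of non-negative beta-smooth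
   functions, together with eta <= 1 / (4 beta) and AM-GM, absorbs both the quadratic term
   of the step and the cost of the perturbation, so that the next iterate w' satisfies
     |w' - wstar|^2 <= |w - wstar|^2 - eta F (w + v) + 4 beta eta (max (r - rho) 0)^2.
   Summing over the iterations telescopes. *)

theory Submission imports Defs begin

lemma has_derivative_grad:
  fixes F :: "'a::euclidean_space \<Rightarrow> real"
  assumes "F differentiable (at x)"
  shows "(F has_derivative (\<lambda>h. grad F x \<bullet> h)) (at x)"
proof -
  obtain D where D: "(F has_derivative D) (at x)"
    using assms differentiable_def by blast
  have "D = (\<lambda>h. adjoint D 1 \<bullet> h)"
    using adjoint_works[OF has_derivative_linear[OF D], of _ 1] by (simp add: inner_commute)
  with D have "\<exists>g. (F has_derivative (\<lambda>h. g \<bullet> h)) (at x)"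
    by metis
  then show ?thesis
    unfolding grad_def by (rule someI_ex)
qed

lemma grad_eqI:
  fixes F :: "'a::euclidean_space \<Rightarrow> real"
  assumes "(F has_derivative (\<lambda>h. g \<bullet> h)) (at x)"
  shows "grad F x = g"
proof -
  have "(\<lambda>h. grad F x \<bullet> h) = (\<lambda>h. g \<bullet> h)"
    using has_derivative_unique has_derivative_grad assms differentiableI by blast
  then have "(grad F x - g) \<bullet> (grad F x - g) = 0"
    by (metis inner_diff_left right_minus_eq)
  then show ?thesis
    by simp
qed

lemma has_real_derivative_along_line:
  fixes F :: "'a::euclidean_space \<Rightarrow> real"
  assumes "\<And>y. F differentiable (at y)"
  shows "((\<lambda>s. F (x + s *\<^sub>R d)) has_real_derivative grad F (x + s *\<^sub>R d) \<bullet> d) (at s)"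
proof -
  have "((\<lambda>s. x + s *\<^sub>R d) has_derivative (\<lambda>t. t *\<^sub>R d)) (at s)"
    by (auto intro!: derivative_eq_intros)
  from has_derivative_compose[OF this has_derivative_grad[OF assms]]
  have "((\<lambda>s. F (x + s *\<^sub>R d)) has_derivative (\<lambda>t. grad F (x + s *\<^sub>R d) \<bullet> (t *\<^sub>R d))) (at s)"
    by (simp add: o_def)
  then show ?thesis
    unfolding has_field_derivative_def
    by (rule has_derivative_eq_rhs) (auto simp: fun_eq_iff mult.commute)
qed

lemma convex_on_grad_above_tangent:
  fixes F :: "'a::euclidean_space \<Rightarrow> real"
  assumes convex: "convex_on UNIV F" and diff: "\<And>y. F differentiable (at y)"
  shows "F x + grad F x \<bullet> (y - x) \<le> F y"
proof -
  define \<phi> where "\<phi> s = F (x + s *\<^sub>R (y - x))" for s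
  have "convex_on UNIV \<phi>"
  proof (rule convex_onI)
    fix t u v :: real
    have "x + ((1 - t) * u + t * v) *\<^sub>R (y - x)
        = (1 - t) *\<^sub>R (x + u *\<^sub>R (y - x)) + t *\<^sub>R (x + v *\<^sub>R (y - x))"
      by (simp add: algebra_simps)
    moreover assume "0 < t" "t < 1"
    ultimately show "\<phi> ((1 - t) *\<^sub>R u + t *\<^sub>R v) \<le> (1 - t) * \<phi> u + t * \<phi> v"
      unfolding \<phi>_def using convex_onD[OF convex, of t] by simp
  qed auto
  moreover have "(\<phi> has_real_derivative grad F x \<bullet> (y - x)) (at 0 within UNIV)"
    unfolding \<phi>_def using has_real_derivative_along_line[OF diff, of x "y - x" 0] by simp
  ultimately have "(grad F x \<bullet> (y - x)) * (1 - 0) \<le> \<phi> 1 - \<phi> 0"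
    by (intro convex_on_imp_above_tangent) auto
  then show ?thesis
    by (simp add: \<phi>_def)
qed

lemma smooth_fun_quadratic_upper_bound:
  fixes F :: "'a::euclidean_space \<Rightarrow> real"
  assumes "smooth_fun \<beta> F"
  shows "F y \<le> F x + grad F x \<bullet> (y - x) + \<beta> / 2 * (norm (y - x))\<^sup>2"
proof -
  define d where "d = y - x"
  have diff: "\<And>y. F differentiable (at y)"
    and lip: "\<And>a b. norm (grad F a - grad F b) \<le> \<beta> * norm (a - b)"
    using assms unfolding smooth_fun_def by auto
  define \<phi> where "\<phi> s = F (x + s *\<^sub>R d) - s * (grad F x \<bullet> d) - \<beta> / 2 * s\<^sup>2 * (norm d)\<^sup>2" for s
  have "\<phi> 1 \<le> \<phi> 0"
  proof (rule DERIV_nonpos_imp_nonincreasing[of 0 1 \<phi>])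
    fix s :: real
    assume s: "0 \<le> s" "s \<le> 1"
    have "(grad F (x + s *\<^sub>R d) - grad F x) \<bullet> d \<le> norm (grad F (x + s *\<^sub>R d) - grad F x) * norm d"
      by (rule norm_cauchy_schwarz)
    also have "\<dots> \<le> \<beta> * s * (norm d)\<^sup>2"
      using mult_right_mono[OF lip[of "x + s *\<^sub>R d" x], of "norm d"] s
      by (simp add: power2_eq_square)
    finally have "grad F (x + s *\<^sub>R d) \<bullet> d - grad F x \<bullet> d - \<beta> * s * (norm d)\<^sup>2 \<le> 0"
      by (simp add: inner_diff_left)
    moreover have "(\<phi> has_real_derivative
        grad F (x + s *\<^sub>R d) \<bullet> d - grad F x \<bullet> d - \<beta> * s * (norm d)\<^sup>2) (at s)"
      unfolding \<phi>_def using has_real_derivative_along_line[OF diff, of x d s]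
      by (auto intro!: derivative_eq_intros simp: power2_eq_square)
    ultimately show "\<exists>y. (\<phi> has_real_derivative y) (at s) \<and> y \<le> 0"
      by blast
  qed simp
  then show ?thesis
    by (simp add: \<phi>_def d_def)
qed

text \<open>A gradient step of length \<open>1/\<beta>\<close> from \<open>x\<close> decreases \<open>F\<close> by at least
  \<open>\<parallel>\<nabla>F x\<parallel>\<^sup>2/(2\<beta>)\<close>, and \<open>F\<close> cannot drop below zero.\<close>

lemma smooth_fun_norm_grad_squared_le:
  fixes F :: "'a::euclidean_space \<Rightarrow> real"
  assumes "smooth_fun \<beta> F" and "0 < \<beta>" and "\<And>y. 0 \<le> F y"
  shows "(norm (grad F x))\<^sup>2 \<le> 2 * \<beta> * F x"
proof -
  define G where "G = grad F x"
  have "0 \<le> F (x - (1 / \<beta>) *\<^sub>R G)"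
    by (rule assms(3))
  also have "\<dots> \<le> F x + G \<bullet> (- (1 / \<beta>) *\<^sub>R G) + \<beta> / 2 * (norm (- (1 / \<beta>) *\<^sub>R G))\<^sup>2"
    using smooth_fun_quadratic_upper_bound[OF assms(1), of "x - (1 / \<beta>) *\<^sub>R G" x]
    by (simp add: G_def)
  also have "\<dots> = F x - (norm G)\<^sup>2 / (2 * \<beta>)"
    using \<open>0 < \<beta>\<close> by (simp add: power2_eq_square field_simps flip: power2_norm_eq_inner)
  finally show ?thesis
    using \<open>0 < \<beta>\<close> by (simp add: G_def field_simps)
qed

lemma le_one_div_four_mult_imp_pos:
  fixes \<eta> \<beta> :: real
  assumes "0 < \<eta>" and "\<eta> \<le> 1 / (4 * \<beta>)"
  shows "0 < \<beta>"
proof -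
  have "0 < 1 / (4 * \<beta>)"
    using assms by linarith
  then show ?thesis
    by simp
qed

lemma flat_min_value: "0 \<le> \<rho> \<Longrightarrow> flat_min \<rho> F w0 \<Longrightarrow> F w0 = 0"
  by (simp add: flat_min_def)

lemma exists_norm_le_dist_le:
  fixes v :: "'a::real_normed_vector"
  assumes "norm v \<le> r" and "0 \<le> \<rho>"
  obtains z where "norm z \<le> \<rho>" and "norm (v - z) \<le> max (r - \<rho>) 0"
proof (cases "norm v \<le> \<rho>")
  case True
  then show ?thesis
    using that[of v] by simp
next
  case False
  then have "0 < norm v"
    using \<open>0 \<le> \<rho>\<close> by linarith
  have "v - (\<rho> / norm v) *\<^sub>R v = (1 - \<rho> / norm v) *\<^sub>R v"
    by (simp add: algebra_simps)
  moreover have "norm ((1 - \<rho> / norm v) *\<^sub>R v) = norm v - \<rho>"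
    using \<open>0 < norm v\<close> False by (simp add: field_simps)
  moreover have "norm ((\<rho> / norm v) *\<^sub>R v) = \<rho>"
    using \<open>0 < norm v\<close> \<open>0 \<le> \<rho>\<close> by simp
  ultimately show ?thesis
    using that[of "(\<rho> / norm v) *\<^sub>R v"] assms by force
qed

text \<open>Convexity is applied between \<open>w + v\<close> and \<open>wstar + z\<close>, where \<open>z\<close> is the point of the
  \<open>\<rho>\<close>-ball closest to \<open>v\<close>: \<open>F\<close> vanishes there, and only the part of \<open>v\<close> outside the
  ball is paid for.\<close>

lemma flat_min_inner_grad_ge:
  fixes F :: "'a::euclidean_space \<Rightarrow> real"
  assumes convex: "convex_on UNIV F" and diff: "\<And>y. F differentiable (at y)"
    and flat: "flat_min \<rho> F wstar" and "0 \<le> \<rho>" and "norm v \<le> r"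
  shows "F (w + v) - norm (grad F (w + v)) * max (r - \<rho>) 0 \<le> grad F (w + v) \<bullet> (w - wstar)"
proof -
  define G where "G = grad F (w + v)"
  obtain z where z: "norm z \<le> \<rho>" "norm (v - z) \<le> max (r - \<rho>) 0"
    using exists_norm_le_dist_le assms by blast
  have "F (w + v) + G \<bullet> (wstar + z - (w + v)) \<le> F (wstar + z)"
    unfolding G_def by (rule convex_on_grad_above_tangent[OF convex diff])
  also have "F (wstar + z) = 0"
    using flat z(1) by (simp add: flat_min_def)
  finally have "F (w + v) - G \<bullet> (v - z) \<le> G \<bullet> (w - wstar)"
    by (simp add: inner_diff_right inner_add_right)
  moreover have "G \<bullet> (v - z) \<le> norm G * max (r - \<rho>) 0"
    using norm_cauchy_schwarz[of G "v - z"] mult_left_mono[OF z(2), of "norm G"] by simp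
  ultimately show ?thesis
    by (simp add: G_def)
qed

lemma perturbed_gradient_step:
  fixes F :: "'a::euclidean_space \<Rightarrow> real"
  assumes convex: "convex_on UNIV F" and smooth: "smooth_fun \<beta> F" and nonneg: "\<And>y. 0 \<le> F y"
    and flat: "flat_min \<rho> F wstar" and "0 \<le> \<rho>"
    and "0 < \<eta>" and "\<eta> \<le> 1 / (4 * \<beta>)" and "norm v \<le> r"
  shows "(norm (w - \<eta> *\<^sub>R grad F (w + v) - wstar))\<^sup>2
           \<le> (norm (w - wstar))\<^sup>2 - \<eta> * F (w + v) + 4 * \<beta> * \<eta> * (max (r - \<rho>) 0)\<^sup>2"
proof -
  define G where "G = grad F (w + v)"
  define \<delta> where "\<delta> = max (r - \<rho>) 0"
  have "0 < \<beta>"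
    using \<open>0 < \<eta>\<close> \<open>\<eta> \<le> 1 / (4 * \<beta>)\<close> by (rule le_one_div_four_mult_imp_pos)
  have diff: "\<And>y. F differentiable (at y)"
    using smooth by (simp add: smooth_fun_def)
  have inner: "F (w + v) - norm G * \<delta> \<le> G \<bullet> (w - wstar)"
    unfolding G_def \<delta>_def using flat_min_inner_grad_ge[OF convex diff flat] assms by blast
  have self_bound: "(norm G)\<^sup>2 \<le> 2 * \<beta> * F (w + v)"
    unfolding G_def by (rule smooth_fun_norm_grad_squared_le[OF smooth \<open>0 < \<beta>\<close> nonneg])
  have am_gm: "2 * norm G * \<delta> \<le> (norm G)\<^sup>2 / (4 * \<beta>) + 4 * \<beta> * \<delta>\<^sup>2"
  proof -
    have "0 \<le> (norm G - 4 * \<beta> * \<delta>)\<^sup>2"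
      by simp
    then show ?thesis
      using \<open>0 < \<beta>\<close> by (simp add: field_simps power2_eq_square)
  qed
  have "\<eta> * (norm G)\<^sup>2 \<le> (norm G)\<^sup>2 / (4 * \<beta>)"
    using mult_right_mono[OF \<open>\<eta> \<le> 1 / (4 * \<beta>)\<close>, of "(norm G)\<^sup>2"] by simp
  moreover have "(norm G)\<^sup>2 / (4 * \<beta>) \<le> F (w + v) / 2"
    using self_bound \<open>0 < \<beta>\<close> by (simp add: field_simps)
  ultimately have "\<eta> * (norm G)\<^sup>2 - 2 * (G \<bullet> (w - wstar)) \<le> 4 * \<beta> * \<delta>\<^sup>2 - F (w + v)"
    using inner am_gm by linarith
  then have "\<eta> * (\<eta> * (norm G)\<^sup>2 - 2 * (G \<bullet> (w - wstar))) \<le> \<eta> * (4 * \<beta> * \<delta>\<^sup>2 - F (w + v))"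
    using \<open>0 < \<eta>\<close> by (simp add: mult_left_mono)
  moreover have "(norm ((w - wstar) - \<eta> *\<^sub>R G))\<^sup>2
      = (norm (w - wstar))\<^sup>2 - 2 * \<eta> * (G \<bullet> (w - wstar)) + \<eta>\<^sup>2 * (norm G)\<^sup>2"
    by (simp only: power2_norm_eq_inner)
      (simp add: inner_diff_left inner_diff_right inner_commute power2_eq_square)
  moreover have "w - \<eta> *\<^sub>R G - wstar = (w - wstar) - \<eta> *\<^sub>R G"
    by simp
  ultimately show ?thesis
    by (simp add: G_def \<delta>_def power2_eq_square algebra_simps)
qed

text \<open>The iterates are only constrained for \<open>t < T\<close>, so the step taken at \<open>t = T\<close> is
  appended as a virtual iterate before telescoping.\<close>

lemma perturbed_gradient_descent_average_bound:
  fixes F :: "'a::euclidean_space \<Rightarrow> real"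
  assumes convex: "convex_on UNIV F" and smooth: "smooth_fun \<beta> F" and nonneg: "\<And>y. 0 \<le> F y"
    and flat: "flat_min \<rho> F wstar" and "0 \<le> \<rho>"
    and "0 < \<eta>" and "\<eta> \<le> 1 / (4 * \<beta>)" and "1 \<le> T"
    and step: "\<And>t. 1 \<le> t \<Longrightarrow> t < T \<Longrightarrow> w (Suc t) = w t - \<eta> *\<^sub>R grad F (w t + v t)"
    and v_bound: "\<And>t. 1 \<le> t \<Longrightarrow> t \<le> T \<Longrightarrow> norm (v t) \<le> r"
  shows "(1 / real T) * (\<Sum>t = 1..T. F (w t + v t)) - F wstar
           \<le> (norm (w 1 - wstar))\<^sup>2 / (\<eta> * real T) + 4 * \<beta> * (max (r - \<rho>) 0)\<^sup>2"
proof -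
  define u where "u t = (if t \<le> T then w t else w T - \<eta> *\<^sub>R grad F (w T + v T))" for t
  define D where "D t = (norm (u t - wstar))\<^sup>2" for t
  define c where "c = 4 * \<beta> * \<eta> * (max (r - \<rho>) 0)\<^sup>2"
  have descent: "\<eta> * F (w t + v t) \<le> D t - D (Suc t) + c" if "1 \<le> t" "t \<le> T" for t
  proof -
    have "u (Suc t) = w t - \<eta> *\<^sub>R grad F (w t + v t)"
      using step[of t] that by (cases "t = T") (auto simp: u_def)
    then show ?thesis
      using perturbed_gradient_step[OF convex smooth nonneg flat, of \<eta> "v t" r "w t"]
        v_bound[OF that] that assms by (simp add: D_def u_def c_def)
  qed
  have "\<eta> * (\<Sum>t = 1..T. F (w t + v t)) \<le> (\<Sum>t = 1..T. D t - D (Suc t) + c)"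
    unfolding sum_distrib_left by (intro sum_mono descent) auto
  also have "\<dots> = D 1 - D (Suc T) + real T * c"
    using sum_Suc_diff[of 1 T D] \<open>1 \<le> T\<close> by (simp add: sum.distrib sum_subtractf)
  also have "\<dots> \<le> (norm (w 1 - wstar))\<^sup>2 + real T * c"
    using \<open>1 \<le> T\<close> by (simp add: D_def u_def)
  finally show ?thesis
    using flat_min_value[OF \<open>0 \<le> \<rho>\<close> flat] \<open>0 < \<eta>\<close> \<open>1 \<le> T\<close>
    by (simp add: c_def field_simps)
qed

lemma has_derivative_emp_risk:
  fixes f :: "'a::euclidean_space \<Rightarrow> 'z \<Rightarrow> real"
  assumes "\<And>z. (\<lambda>x. f x z) differentiable (at x)"
  shows "(emp_risk f n S has_derivative
           (\<lambda>h. ((1 / real n) *\<^sub>R (\<Sum>i<n. grad (\<lambda>x. f x (S i)) x)) \<bullet> h)) (at x)"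
proof -
  have "((\<lambda>w. (1 / real n) * (\<Sum>i<n. f w (S i))) has_derivative
       (\<lambda>h. (1 / real n) * (\<Sum>i<n. grad (\<lambda>x. f x (S i)) x \<bullet> h))) (at x)"
    by (rule has_derivative_mult_right, rule has_derivative_sum)
      (rule has_derivative_grad[OF assms])
  then show ?thesis
    by (simp add: emp_risk_def[abs_def] inner_sum_left)
qed

lemma grad_emp_risk:
  fixes f :: "'a::euclidean_space \<Rightarrow> 'z \<Rightarrow> real"
  assumes "\<And>z. (\<lambda>x. f x z) differentiable (at x)"
  shows "grad (emp_risk f n S) x = (1 / real n) *\<^sub>R (\<Sum>i<n. grad (\<lambda>x. f x (S i)) x)"
  by (rule grad_eqI[OF has_derivative_emp_risk[OF assms]])

lemma smooth_fun_emp_risk: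
  fixes f :: "'a::euclidean_space \<Rightarrow> 'z \<Rightarrow> real"
  assumes smooth: "\<And>z. smooth_fun \<beta> (\<lambda>x. f x z)" and "0 \<le> \<beta>"
  shows "smooth_fun \<beta> (emp_risk f n S)"
  unfolding smooth_fun_def
proof (intro conjI allI)
  have diff: "\<And>z x. (\<lambda>x. f x z) differentiable (at x)"
    using smooth by (simp add: smooth_fun_def)
  show "emp_risk f n S differentiable (at x)" for x
    by (rule differentiableI[OF has_derivative_emp_risk[OF diff]])
  fix x y :: 'a
  have "grad (emp_risk f n S) x - grad (emp_risk f n S) y
      = (1 / real n) *\<^sub>R (\<Sum>i<n. grad (\<lambda>x. f x (S i)) x - grad (\<lambda>x. f x (S i)) y)"
    by (simp add: grad_emp_risk[OF diff] sum_subtractf scaleR_diff_right)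
  also have "norm \<dots> \<le> (1 / real n) * (\<Sum>i<n. norm (grad (\<lambda>x. f x (S i)) x - grad (\<lambda>x. f x (S i)) y))"
    by (simp add: divide_right_mono norm_sum)
  also have "\<dots> \<le> (1 / real n) * (\<Sum>i<n. \<beta> * norm (x - y))"
    using smooth by (intro mult_left_mono sum_mono) (auto simp: smooth_fun_def)
  also have "\<dots> \<le> \<beta> * norm (x - y)"
    using \<open>0 \<le> \<beta>\<close> by (cases "n = 0") (simp_all add: mult_nonneg_nonneg)
  finally show "norm (grad (emp_risk f n S) x - grad (emp_risk f n S) y) \<le> \<beta> * norm (x - y)" .
qed

lemma convex_on_emp_risk:
  assumes "\<And>z. convex_on UNIV (\<lambda>x. f x z)"
  shows "convex_on UNIV (emp_risk f n S)"
proof -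
  have "convex_on UNIV (\<lambda>w. \<Sum>i<n. f w (S i))"
  proof (induction n)
    case (Suc n)
    then show ?case
      by (simp add: convex_on_add assms)
  qed (simp add: convex_on_const)
  then show ?thesis
    unfolding emp_risk_def[abs_def] by (intro convex_on_cmul) auto
qed

lemma emp_risk_nonneg: "(\<And>x z. 0 \<le> f x z) \<Longrightarrow> 0 \<le> emp_risk f n S w"
  by (simp add: emp_risk_def sum_nonneg)

lemma flat_min_emp_risk:
  assumes "\<And>i. i < n \<Longrightarrow> flat_min \<rho> (\<lambda>x. f x (S i)) wstar"
  shows "flat_min \<rho> (emp_risk f n S) wstar"
  using assms by (simp add: flat_min_def emp_risk_def)

theorem mainTheorem2:
  fixes f :: "'a::euclidean_space \<Rightarrow> 'z \<Rightarrow> real"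
    and S :: "nat \<Rightarrow> 'z" and n :: nat
    and \<beta> \<rho> \<eta> r :: real and wstar :: 'a
    and w v :: "nat \<Rightarrow> 'a" and T :: nat
  assumes nonneg: "\<And>x z. f x z \<ge> 0"
    and convex: "\<And>z. convex_on UNIV (\<lambda>x. f x z)"
    and smooth: "\<And>z. smooth_fun \<beta> (\<lambda>x. f x z)"
    and rho: "\<rho> \<ge> 0"
    and flat: "\<And>i. i < n \<Longrightarrow> flat_min \<rho> (\<lambda>x. f x (S i)) wstar"
    and eta_pos: "0 < \<eta>" and eta_le: "\<eta> \<le> 1 / (4 * \<beta>)"
    and r_pos: "r > 0"
    and T_pos: "T \<ge> 1"
    and step: "\<And>t. 1 \<le> t \<Longrightarrow> t < T \<Longrightarrow>
                 w (Suc t) = w t - \<eta> *\<^sub>R grad (emp_risk f n S) (w t + v t)"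
    and v_bound: "\<And>t. 1 \<le> t \<Longrightarrow> t \<le> T \<Longrightarrow> norm (v t) \<le> r"
  shows "(1 / real T) * (\<Sum>t = 1..T. emp_risk f n S (w t + v t)) - emp_risk f n S wstar
           \<le> (norm (w 1 - wstar))\<^sup>2 / (\<eta> * real T) + 4 * \<beta> * (max (r - \<rho>) 0)\<^sup>2"
proof -
  have "0 \<le> \<beta>"
    using le_one_div_four_mult_imp_pos[OF eta_pos eta_le] by simp
  have "convex_on UNIV (emp_risk f n S)"
    using convex by (rule convex_on_emp_risk)
  moreover have "smooth_fun \<beta> (emp_risk f n S)"
    using smooth \<open>0 \<le> \<beta>\<close> by (rule smooth_fun_emp_risk)
  moreover have "\<And>w. 0 \<le> emp_risk f n S w"
    using nonneg by (rule emp_risk_nonneg)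
  moreover have "flat_min \<rho> (emp_risk f n S) wstar"
    using flat by (rule flat_min_emp_risk)
  ultimately show ?thesis
    using perturbed_gradient_descent_average_bound rho eta_pos eta_le T_pos step v_bound
    by blast
qed

end
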